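(* Let $P_k$ be a real symmetric positive semidefinite $n\times n$ matrix, $\tilde P_k\in\mathcal S_n$, and $\hat\Delta_k$ a real symmetric $n\times n$ matrix with nonnegative entries such that $|\tilde P_k-P_k|\leq\hat\Delta_k$ entrywise. Let $S^*_k$ be an optimal solution of $$\min_{S\in\mathcal S_n}\ \operatorname{tr}(\tilde P_k+S)\quad\text{subject to}\quad [S]_{ii}\geq\sum_{j=1}^n[\hat\Delta_k]_{ij}+\sum_{j=1,\,j\neq i}^n|[S]_{ij}|,\ \ i=1,\ldots,n,$$ and set $\hat P_k=\tilde P_k+S_k^*$. Then for every $W\in\{0,1\}^{n\times n}$, $$\|W\odot(\hat P_k-P_k)\|_F\leq\|W\odot(\operatorname{diag}(\hat\Delta_k\mathbf 1)+\hat\Delta_k)\|_F.$$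
   Context: $\mathcal S_n$ denotes the set of real symmetric $n\times n$ matrices; $|M|$ is the entrywise absolute value and $\leq$ between matrices is entrywise; $\odot$ is the entrywise (Hadamard) product; $\|\cdot\|_F$ is the Frobenius norm; $\mathbf 1$ is the all-ones vector; $\operatorname{diag}(v)$ is the diagonal matrix with diagonal $v$. *)

theory Defs
  imports "HOL-Analysis.Analysis"
begin

definition sym_mat :: "real^'n^'n \<Rightarrow> bool" where
  "sym_mat A \<longleftrightarrow> transpose A = A"

definition psd_mat :: "real^'n^'n \<Rightarrow> bool" where
  "psd_mat A \<longleftrightarrow> sym_mat A \<and> (\<forall>x::real^'n. 0 \<le> x \<bullet> (A *v x))"

definition mat_abs :: "real^'n^'m \<Rightarrow> real^'n^'m" where
  "mat_abs A = (\<chi> i j. \<bar>A $ i $ j\<bar>)"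

definition mat_le :: "real^'n^'m \<Rightarrow> real^'n^'m \<Rightarrow> bool" where
  "mat_le A B \<longleftrightarrow> (\<forall>i j. A $ i $ j \<le> B $ i $ j)"

definition hadamard :: "real^'n^'m \<Rightarrow> real^'n^'m \<Rightarrow> real^'n^'m" where
  "hadamard A B = (\<chi> i j. A $ i $ j * B $ i $ j)"

definition frob_norm :: "real^'n^'m \<Rightarrow> real" where
  "frob_norm A = sqrt (\<Sum>i\<in>UNIV. \<Sum>j\<in>UNIV. (A $ i $ j)\<^sup>2)"

definition diag_mat :: "real^'n \<Rightarrow> real^'n^'n" where
  "diag_mat v = (\<chi> i j. if i = j then v $ i else 0)"

definition feasible_S :: "real^'n^'n \<Rightarrow> real^'n^'n \<Rightarrow> bool" where
  "feasible_S Delta S \<longleftrightarrow> sym_mat S \<and>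
     (\<forall>i. S $ i $ i \<ge> (\<Sum>j\<in>UNIV. Delta $ i $ j) + (\<Sum>j\<in>UNIV - {i}. \<bar>S $ i $ j\<bar>))"

definition optimal_S :: "real^'n^'n \<Rightarrow> real^'n^'n \<Rightarrow> real^'n^'n \<Rightarrow> bool" where
  "optimal_S Pt Delta S \<longleftrightarrow> feasible_S Delta S \<and>
     (\<forall>S'. feasible_S Delta S' \<longrightarrow> trace (Pt + S) \<le> trace (Pt + S'))"

end

theory Submission
  imports Defs
begin

text \<open>The constraint forces every diagonal entry of a feasible S to dominate the corresponding
  row sum of \<open>\<Delta>\<close>, and the diagonal matrix of these row sums is itself feasible. Hence the minimal
  trace is the total row sum, which forces the optimum to be exactly \<open>diag(\<Delta>\<one>)\<close>, i.e. no
  off-diagonal mass and no slack. Entrywise, \<open>\<hat>P - P = (\<tilde>P - P) + diag(\<Delta>\<one>)\<close> is then bounded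
  in absolute value by \<open>diag(\<Delta>\<one>) + \<Delta>\<close>, and masking by W preserves the entrywise bound.\<close>

lemma frob_norm_mono:
  fixes A B :: "real^'n^'m"
  assumes "\<And>i j. \<bar>A $ i $ j\<bar> \<le> \<bar>B $ i $ j\<bar>"
  shows "frob_norm A \<le> frob_norm B"
  unfolding frob_norm_def
  by (intro real_sqrt_le_mono sum_mono) (simp add: abs_le_square_iff[symmetric] assms)

lemma frob_norm_hadamard_mono:
  fixes A B W :: "real^'n^'m"
  assumes "\<And>i j. \<bar>A $ i $ j\<bar> \<le> \<bar>B $ i $ j\<bar>"
  shows "frob_norm (hadamard W A) \<le> frob_norm (hadamard W B)"
  by (rule frob_norm_mono) (simp add: hadamard_def abs_mult assms mult_left_mono)

lemma diag_row_sums_nth: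
  fixes Delta :: "real^'n^'n"
  shows "diag_mat (Delta *v (\<chi> i. 1)) $ i $ j = (if i = j then (\<Sum>k\<in>UNIV. Delta $ i $ k) else 0)"
  by (simp add: diag_mat_def matrix_vector_mult_def)

lemma feasible_S_diag_row_sums: "feasible_S Delta (diag_mat (Delta *v (\<chi> i. 1)))"
  by (simp add: feasible_S_def sym_mat_def vec_eq_iff transpose_def diag_row_sums_nth)

lemma trace_diag_row_sums:
  fixes Delta :: "real^'n^'n"
  shows "trace (diag_mat (Delta *v (\<chi> i. 1))) = (\<Sum>i\<in>UNIV. \<Sum>k\<in>UNIV. Delta $ i $ k)"
  by (simp add: trace_def diag_row_sums_nth)

lemma optimal_S_eq_diag_row_sums:
  fixes Pt Delta S :: "real^'n^'n"
  assumes "optimal_S Pt Delta S"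
  shows "S = diag_mat (Delta *v (\<chi> i. 1))"
proof -
  define r where "r i = (\<Sum>k\<in>UNIV. Delta $ i $ k)" for i
  define off where "off i = (\<Sum>j\<in>UNIV - {i}. \<bar>S $ i $ j\<bar>)" for i
  have off_nonneg: "0 \<le> off i" for i
    by (simp add: off_def sum_nonneg)
  have diag_ge: "r i + off i \<le> S $ i $ i" for i
    using assms unfolding optimal_S_def feasible_S_def r_def off_def by blast
  have "trace (Pt + S) \<le> trace (Pt + diag_mat (Delta *v (\<chi> i. 1)))"
    using assms feasible_S_diag_row_sums unfolding optimal_S_def by blast
  hence trace_le: "(\<Sum>i\<in>UNIV. S $ i $ i - r i) \<le> 0"
    by (simp add: trace_add trace_diag_row_sums sum_subtractf r_def) (simp add: trace_def)
  have slack_nonneg: "\<forall>i\<in>UNIV. 0 \<le> S $ i $ i - r i"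
    using diag_ge off_nonneg by (smt (verit))
  hence "\<forall>i\<in>UNIV. S $ i $ i - r i = 0"
    using trace_le sum_nonneg_eq_0_iff[of UNIV "\<lambda>i. S $ i $ i - r i"]
    by (simp add: order_antisym sum_nonneg)
  hence diag_eq: "S $ i $ i = r i" and off_zero: "off i = 0" for i
    using diag_ge[of i] off_nonneg[of i] by auto
  have "S $ i $ j = 0" if "i \<noteq> j" for i j
    using off_zero[of i] that unfolding off_def by (subst (asm) sum_nonneg_eq_0_iff) auto
  thus ?thesis
    by (simp add: vec_eq_iff diag_row_sums_nth diag_eq r_def)
qed

lemma abs_perturbed_le:
  fixes Pt P Delta D :: "real^'n^'n"
  assumes "mat_le (mat_abs (Pt - P)) Delta" and "\<forall>i j. 0 \<le> Delta $ i $ j"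
    and "\<forall>i j. 0 \<le> D $ i $ j"
  shows "\<bar>(Pt + D - P) $ i $ j\<bar> \<le> \<bar>(D + Delta) $ i $ j\<bar>"
proof -
  have "\<bar>Pt $ i $ j - P $ i $ j\<bar> \<le> Delta $ i $ j"
    using assms(1) by (simp add: mat_le_def mat_abs_def)
  thus ?thesis
    using assms(2,3) by (smt (verit) vector_add_component vector_minus_component)
qed

theorem mainTheorem4:
  fixes P Pt Delta S W :: "real^'n^'n"
  assumes "psd_mat P"
    and "sym_mat Pt"
    and "sym_mat Delta"
    and "\<forall>i j. 0 \<le> Delta $ i $ j"
    and "mat_le (mat_abs (Pt - P)) Delta"
    and "optimal_S Pt Delta S"
    and "\<forall>i j. W $ i $ j \<in> {0, 1}"
  shows "frob_norm (hadamard W ((Pt + S) - P))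
           \<le> frob_norm (hadamard W (diag_mat (Delta *v (\<chi> i. 1)) + Delta))"
proof -
  have S_eq: "S = diag_mat (Delta *v (\<chi> i. 1))"
    using assms(6) by (rule optimal_S_eq_diag_row_sums)
  have "\<forall>i j. 0 \<le> S $ i $ j"
    using assms(4) by (simp add: S_eq diag_row_sums_nth sum_nonneg)
  with assms(4,5) show ?thesis
    unfolding S_eq[symmetric] by (intro frob_norm_hadamard_mono abs_perturbed_le)
qed

end
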